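(* Let $G$ be a graph with no induced $P_7$, $C_4$, $C_6$ or $C_7$, let $H=(B_1,\dots,B_5)$ be a nice blowup of $C_5$ in $G$, and let $i\in\{1,\dots,5\}$. If $a-b-c$ is an induced path on three vertices with $a,b,c\in A_3(i)$, then $N_H(a)\subseteq N_H(b)$ and $N_H(c)\subseteq N_H(b)$.
   Context: Indices modulo $5$. A nice blowup of $C_5$ is a tuple $(B_1,\dots,B_5)$ of pairwise disjoint cliques such that every vertex of $B_j$ has a neighbor in $B_{j-1}$ and in $B_{j+1}$, $B_j$ is anticomplete to $B_{j+2}$, and there are no $a\in B_j$, distinct $b,c\in B_{j+1}$, $d\in B_{j+2}$ with $G[\{a,b,c,d\}]\cong P_4$; $V(H)=\bigcup B_j$. For $v\notin V(H)$, $\operatorname{supp}(v)$ is the set of $j$ such that $v$ has a neighbor in $B_j$; $A_3(i)=\{v\notin V(H):\operatorname{supp}(v)=\{i-1,i,i+1\}\}$; $N_H(v)$ is the set of neighbors of $v$ in $V(H)$. *)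

theory Defs
  imports Main
begin

definition simple_graph :: "'a set \<Rightarrow> ('a \<Rightarrow> 'a \<Rightarrow> bool) \<Rightarrow> bool" where
  "simple_graph V E \<longleftrightarrow> finite V \<and> (\<forall>x y. E x y \<longrightarrow> x \<in> V \<and> y \<in> V)
     \<and> (\<forall>x y. E x y \<longrightarrow> E y x) \<and> (\<forall>x. \<not> E x x)"

definition induced_path :: "'a set \<Rightarrow> ('a \<Rightarrow> 'a \<Rightarrow> bool) \<Rightarrow> 'a list \<Rightarrow> bool" where
  "induced_path V E xs \<longleftrightarrow> distinct xs \<and> set xs \<subseteq> V \<and>
     (\<forall>i<length xs. \<forall>j<length xs. E (xs!i) (xs!j) \<longleftrightarrow> (i = j + 1 \<or> j = i + 1))"

definition induced_cycle :: "'a set \<Rightarrow> ('a \<Rightarrow> 'a \<Rightarrow> bool) \<Rightarrow> 'a list \<Rightarrow> bool" where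
  "induced_cycle V E xs \<longleftrightarrow> distinct xs \<and> set xs \<subseteq> V \<and>
     (\<forall>i<length xs. \<forall>j<length xs. E (xs!i) (xs!j) \<longleftrightarrow>
        (i = (j + 1) mod length xs \<or> j = (i + 1) mod length xs))"

definition has_induced_P :: "nat \<Rightarrow> 'a set \<Rightarrow> ('a \<Rightarrow> 'a \<Rightarrow> bool) \<Rightarrow> bool" where
  "has_induced_P k V E \<longleftrightarrow> (\<exists>xs. length xs = k \<and> induced_path V E xs)"

definition has_induced_C :: "nat \<Rightarrow> 'a set \<Rightarrow> ('a \<Rightarrow> 'a \<Rightarrow> bool) \<Rightarrow> bool" where
  "has_induced_C k V E \<longleftrightarrow> (\<exists>xs. length xs = k \<and> induced_cycle V E xs)"

text \<open>Blowups of C5 are indexed by 0..4 (paper: 1..5), indices taken mod 5.\<close>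
definition clique :: "'a set \<Rightarrow> ('a \<Rightarrow> 'a \<Rightarrow> bool) \<Rightarrow> 'a set \<Rightarrow> bool" where
  "clique V E X \<longleftrightarrow> X \<subseteq> V \<and> (\<forall>x\<in>X. \<forall>y\<in>X. x \<noteq> y \<longrightarrow> E x y)"

definition anticomplete :: "('a \<Rightarrow> 'a \<Rightarrow> bool) \<Rightarrow> 'a set \<Rightarrow> 'a set \<Rightarrow> bool" where
  "anticomplete E X Y \<longleftrightarrow> (\<forall>x\<in>X. \<forall>y\<in>Y. \<not> E x y)"

definition nice_blowup_C5 :: "'a set \<Rightarrow> ('a \<Rightarrow> 'a \<Rightarrow> bool) \<Rightarrow> (nat \<Rightarrow> 'a set) \<Rightarrow> bool" where
  "nice_blowup_C5 V E B \<longleftrightarrow>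
     (\<forall>j<5. clique V E (B j)) \<and>
     (\<forall>j<5. \<forall>k<5. j \<noteq> k \<longrightarrow> B j \<inter> B k = {}) \<and>
     (\<forall>j<5. \<forall>v\<in>B j. (\<exists>u\<in>B ((j + 4) mod 5). E v u) \<and> (\<exists>u\<in>B ((j + 1) mod 5). E v u)) \<and>
     (\<forall>j<5. anticomplete E (B j) (B ((j + 2) mod 5))) \<and>
     (\<forall>j<5. \<not> (\<exists>a b c d. a \<in> B j \<and> b \<in> B ((j + 1) mod 5) \<and> c \<in> B ((j + 1) mod 5) \<and> b \<noteq> c
            \<and> d \<in> B ((j + 2) mod 5) \<and>
            (\<exists>xs. length xs = 4 \<and> set xs = {a, b, c, d} \<and> induced_path V E xs)))"

definition VH :: "(nat \<Rightarrow> 'a set) \<Rightarrow> 'a set" where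
  "VH B = (\<Union>j<5. B j)"

definition supp :: "('a \<Rightarrow> 'a \<Rightarrow> bool) \<Rightarrow> (nat \<Rightarrow> 'a set) \<Rightarrow> 'a \<Rightarrow> nat set" where
  "supp E B v = {j. j < 5 \<and> (\<exists>u\<in>B j. E v u)}"

definition A3 :: "'a set \<Rightarrow> ('a \<Rightarrow> 'a \<Rightarrow> bool) \<Rightarrow> (nat \<Rightarrow> 'a set) \<Rightarrow> nat \<Rightarrow> 'a set" where
  "A3 V E B i = {v \<in> V - VH B. supp E B v = {(i + 4) mod 5, i, (i + 1) mod 5}}"

definition NH :: "('a \<Rightarrow> 'a \<Rightarrow> bool) \<Rightarrow> (nat \<Rightarrow> 'a set) \<Rightarrow> 'a \<Rightarrow> 'a set" where
  "NH E B v = {u \<in> VH B. E v u}"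

end

theory Submission
  imports Defs
begin

text \<open>Write P1, ..., P4 for the bags B(i+1), ..., B(i+4). Every vertex of A3(i) and of B(i)
  is an apex: it lies outside P1 and P4, has no neighbour in P2 or P3, and has neighbours in
  both P1 and P4. Any vertex of P1 is joined to any vertex of P4 by an induced path on four or
  five vertices with interior in P2 and P3, so closing it up through one or two further
  vertices produces a forbidden hole or an induced P7. Together with C4-freeness this shows:
  on an induced path p - r - s with r and s apexes, every neighbour of p in P1 or P4 is a
  neighbour of r. Applied to c - b - a, and to b - a - x for an apex x adjacent to a but not
  to b, the vertex a would see neighbours z in P1 and w in P4 of c, and a - z - c - w would be
  an induced C4.\<close>

lemma simple_graph_adj_sym: "simple_graph V E \<Longrightarrow> E x y = E y x"
  unfolding simple_graph_def by blast

lemma simple_graph_adj_irrefl: "simple_graph V E \<Longrightarrow> \<not> E x x"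
  unfolding simple_graph_def by blast

lemma simple_graph_adj_in_V: "simple_graph V E \<Longrightarrow> E x y \<Longrightarrow> x \<in> V"
  unfolding simple_graph_def by blast

lemma has_induced_C4I:
  assumes G: "simple_graph V E"
    and "E a b" "E b c" "E c d" "E d a" "\<not> E a c" "\<not> E b d" "a \<noteq> c" "b \<noteq> d"
  shows "has_induced_C 4 V E"
proof -
  have "set [a, b, c, d] \<subseteq> V"
    using assms(2-5) simple_graph_adj_in_V[OF G] by auto
  then have "induced_cycle V E [a, b, c, d]"
    using assms simple_graph_adj_sym[OF G] simple_graph_adj_irrefl[OF G]
    unfolding induced_cycle_def by (auto simp: All_less_Suc2)
  then show ?thesis
    unfolding has_induced_C_def by (intro exI[of _ "[a, b, c, d]"]) simp
qed

lemma has_induced_C6I: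
  assumes G: "simple_graph V E"
    and "E a b" "E b c" "E c d" "E d e" "E e f" "E f a"
    and "\<not> E a c" "\<not> E a d" "\<not> E a e" "\<not> E b d" "\<not> E b e" "\<not> E b f" "\<not> E c e" "\<not> E c f" "\<not> E d f"
  shows "has_induced_C 6 V E"
proof -
  have "set [a, b, c, d, e, f] \<subseteq> V"
    using assms(2-7) simple_graph_adj_in_V[OF G] by auto
  then have "induced_cycle V E [a, b, c, d, e, f]"
    using assms simple_graph_adj_sym[OF G] simple_graph_adj_irrefl[OF G]
    unfolding induced_cycle_def by (auto simp: All_less_Suc2)
  then show ?thesis
    unfolding has_induced_C_def by (intro exI[of _ "[a, b, c, d, e, f]"]) simp
qed

lemma has_induced_C7I:
  assumes G: "simple_graph V E"
    and "E a b" "E b c" "E c d" "E d e" "E e f" "E f g" "E g a"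
    and "\<not> E a c" "\<not> E a d" "\<not> E a e" "\<not> E a f" "\<not> E b d" "\<not> E b e" "\<not> E b f" "\<not> E b g"
      "\<not> E c e" "\<not> E c f" "\<not> E c g" "\<not> E d f" "\<not> E d g" "\<not> E e g"
  shows "has_induced_C 7 V E"
proof -
  have "set [a, b, c, d, e, f, g] \<subseteq> V"
    using assms(2-8) simple_graph_adj_in_V[OF G] by auto
  then have "induced_cycle V E [a, b, c, d, e, f, g]"
    using assms simple_graph_adj_sym[OF G] simple_graph_adj_irrefl[OF G]
    unfolding induced_cycle_def by (auto simp: All_less_Suc2)
  then show ?thesis
    unfolding has_induced_C_def by (intro exI[of _ "[a, b, c, d, e, f, g]"]) simp
qed

lemma has_induced_P7I:
  assumes G: "simple_graph V E"
    and "E a b" "E b c" "E c d" "E d e" "E e f" "E f g"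
    and "\<not> E a c" "\<not> E a d" "\<not> E a e" "\<not> E a f" "\<not> E a g" "\<not> E b d" "\<not> E b e" "\<not> E b f" "\<not> E b g"
      "\<not> E c e" "\<not> E c f" "\<not> E c g" "\<not> E d f" "\<not> E d g" "\<not> E e g"
  shows "has_induced_P 7 V E"
proof -
  have "set [a, b, c, d, e, f, g] \<subseteq> V"
    using assms(2-7) simple_graph_adj_in_V[OF G] simple_graph_adj_sym[OF G] by auto
  then have "induced_path V E [a, b, c, d, e, f, g]"
    using assms simple_graph_adj_sym[OF G] simple_graph_adj_irrefl[OF G]
    unfolding induced_path_def by (auto simp: All_less_Suc2)
  then show ?thesis
    unfolding has_induced_P_def by (intro exI[of _ "[a, b, c, d, e, f, g]"]) simp
qed

lemma cliqueD: "clique V E X \<Longrightarrow> x \<in> X \<Longrightarrow> y \<in> X \<Longrightarrow> x \<noteq> y \<Longrightarrow> E x y"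
  unfolding clique_def by blast

lemma anticompleteD: "anticomplete E X Y \<Longrightarrow> x \<in> X \<Longrightarrow> y \<in> Y \<Longrightarrow> \<not> E x y"
  unfolding anticomplete_def by blast

lemma anticomplete_sym: "(\<And>x y. E x y = E y x) \<Longrightarrow> anticomplete E X Y \<Longrightarrow> anticomplete E Y X"
  unfolding anticomplete_def by blast

locale P7_C4_C6_C7_free =
  fixes V :: "'a set" and E :: "'a \<Rightarrow> 'a \<Rightarrow> bool"
  assumes simple: "simple_graph V E"
    and no_P7: "\<not> has_induced_P 7 V E" and no_C4: "\<not> has_induced_C 4 V E"
    and no_C6: "\<not> has_induced_C 6 V E" and no_C7: "\<not> has_induced_C 7 V E"
begin

lemma adj_sym: "E x y = E y x"
  using simple_graph_adj_sym[OF simple] .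

lemma C4_free: "\<lbrakk>E a b; E b c; E c d; E d a; \<not> E a c; \<not> E b d; a \<noteq> c; b \<noteq> d\<rbrakk> \<Longrightarrow> False"
  using has_induced_C4I[OF simple] no_C4 by blast

end

locale P4_blowup = P7_C4_C6_C7_free +
  fixes P1 P2 P3 P4 :: "'a set"
  assumes cliques: "clique V E P1" "clique V E P2" "clique V E P3" "clique V E P4"
    and P1_to_P2: "x \<in> P1 \<Longrightarrow> \<exists>y\<in>P2. E x y"
    and P2_to_P3: "x \<in> P2 \<Longrightarrow> \<exists>y\<in>P3. E x y"
    and P3_to_P2: "x \<in> P3 \<Longrightarrow> \<exists>y\<in>P2. E x y"
    and P4_to_P3: "x \<in> P4 \<Longrightarrow> \<exists>y\<in>P3. E x y"
    and anticomplete: "anticomplete E P1 P3" "anticomplete E P1 P4" "anticomplete E P2 P4"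
    and disjoint: "P1 \<inter> P4 = {}"
begin

definition outside :: "'a \<Rightarrow> bool" where
  "outside v \<longleftrightarrow> v \<notin> P1 \<union> P4 \<and> (\<forall>x\<in>P2 \<union> P3. \<not> E v x)"

definition apex :: "'a \<Rightarrow> bool" where
  "apex v \<longleftrightarrow> outside v \<and> (\<exists>y\<in>P1. E v y) \<and> (\<exists>y\<in>P4. E v y)"

lemma apex_outside: "apex v \<Longrightarrow> outside v"
  unfolding apex_def by blast

lemma mirror: "P4_blowup V E P4 P3 P2 P1"
  using cliques P1_to_P2 P2_to_P3 P3_to_P2 P4_to_P3 disjoint
    anticomplete_sym[OF adj_sym anticomplete(1)] anticomplete_sym[OF adj_sym anticomplete(2)]
    anticomplete_sym[OF adj_sym anticomplete(3)]
  by unfold_locales auto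

lemma mirror_outside: "P4_blowup.outside E P4 P3 P2 P1 = outside"
  unfolding P4_blowup.outside_def[OF mirror] outside_def by blast

lemma mirror_apex: "P4_blowup.apex E P4 P3 P2 P1 = apex"
  unfolding P4_blowup.apex_def[OF mirror] apex_def mirror_outside by blast

lemma outside_nonadj: "outside v \<Longrightarrow> x \<in> P2 \<union> P3 \<Longrightarrow> \<not> E v x"
  unfolding outside_def by blast

lemma P1_P4_induced_path:
  assumes u: "u \<in> P1" and w: "w \<in> P4"
  obtains d e where "d \<in> P2" "e \<in> P3" "E u d" "E d e" "E e w" "\<not> E u e" "\<not> E u w" "\<not> E d w"
  | d d' e where "d \<in> P2" "d' \<in> P2" "e \<in> P3" "E u d" "E d d'" "E d' e" "E e w"
      "\<not> E u d'" "\<not> E u e" "\<not> E u w" "\<not> E d e" "\<not> E d w" "\<not> E d' w"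
proof -
  have far: "\<not> E u w" "\<not> E u e" "\<not> E d w" if "d \<in> P2" "e \<in> P3" for d e
    using anticompleteD[OF anticomplete(1)] anticompleteD[OF anticomplete(2)]
      anticompleteD[OF anticomplete(3)] u w that by blast+
  obtain d where d: "d \<in> P2" "E u d" using P1_to_P2 u by blast
  obtain e where e: "e \<in> P3" "E e w" using P4_to_P3 w adj_sym by blast
  show thesis
  proof (cases "E d e")
    case True
    then show thesis using that(1) d e far by blast
  next
    case de: False
    obtain d' where d': "d' \<in> P2" "E d' e" using P3_to_P2 e adj_sym by blast
    show thesis
    proof (cases "E u d'")
      case True
      then show thesis using that(1) d' e far by blast
    next
      case False
      have "E d d'" using cliqueD[OF cliques(2) d(1) d'(1)] de d' by blast
      then show thesis using that(2) d d' e de False far by blast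
    qed
  qed
qed

text \<open>Closing the path from P1 to P4 through an edge gives a hole of length 6 or 7, through an
  induced path on three vertices a hole of length 7 or 8; a hole of length 8 contains an
  induced P7.\<close>

lemma no_hole_via_edge:
  assumes p: "outside p" and q: "outside q" and pq: "E p q"
    and u: "u \<in> P1" "E p u" "\<not> E q u" and w: "w \<in> P4" "E q w" "\<not> E p w"
  shows False
  using u(1) w(1)
proof (cases rule: P1_P4_induced_path)
  case (1 d e)
  with outside_nonadj[OF p] outside_nonadj[OF q] show False
    using has_induced_C6I[OF simple, of p u d e w q] no_C6 assms by (auto simp: adj_sym)
next
  case (2 d d' e)
  with outside_nonadj[OF p] outside_nonadj[OF q] show False
    using has_induced_C7I[OF simple, of p u d d' e w q] no_C7 assms by (auto simp: adj_sym)
qed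

lemma no_hole_via_P3:
  assumes p: "outside p" and q: "outside q" and r: "outside r"
    and pq: "E p q" and qr: "E q r" and pr: "\<not> E p r"
    and u: "u \<in> P1" "E p u" "\<not> E q u" "\<not> E r u"
    and w: "w \<in> P4" "E r w" "\<not> E p w" "\<not> E q w"
  shows False
  using u(1) w(1)
proof (cases rule: P1_P4_induced_path)
  case (1 d e)
  with outside_nonadj[OF p] outside_nonadj[OF q] outside_nonadj[OF r] show False
    using has_induced_C7I[OF simple, of p u d e w r q] no_C7 assms by (auto simp: adj_sym)
next
  case (2 d d' e)
  with outside_nonadj[OF p] outside_nonadj[OF r] show False
    using has_induced_P7I[OF simple, of p u d d' e w r] no_P7 assms by (auto simp: adj_sym)
qed

lemma apex_path_P1_neighbour:
  assumes p: "outside p" and r: "outside r" and s: "apex s"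
    and pr: "E p r" and rs: "E r s" and ps: "\<not> E p s" "p \<noteq> s"
    and y: "y \<in> P1" "E r y" and u: "u \<in> P1" "E p u"
  shows "E r u"
proof (rule ccontr)
  assume ru: "\<not> E r u"
  obtain z w where z: "z \<in> P1" "E s z" and w: "w \<in> P4" "E s w"
    using s unfolding apex_def by blast
  have not_P1: "p \<notin> P1" "r \<notin> P1" "s \<notin> P1"
    using p r s unfolding apex_def outside_def by blast+
  have P1_P4: "\<not> E x x'" "x \<noteq> x'" if "x \<in> P1" "x' \<in> P4" for x x'
    using anticompleteD[OF anticomplete(2) that] disjoint that by blast+
  have P1_adj: "E x x'" if "x \<in> P1" "x' \<in> P1" "x \<noteq> x'" for x x'
    using cliqueD[OF cliques(1) that] .
  have su: "\<not> E s u"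
    using C4_free[of p u s r] u ps pr rs ru not_P1 by (auto simp: adj_sym)
  have pw: "E p w"
  proof (rule ccontr)
    assume pw: "\<not> E p w"
    show False
    proof (cases "E r w")
      case True
      show False by (rule no_hole_via_edge[OF p r pr u ru w(1) True pw])
    next
      case False
      show False by (rule no_hole_via_P3[OF p r apex_outside[OF s] pr rs ps(1) u ru su w pw False])
    qed
  qed
  have pz: "\<not> E p z"
    using C4_free[of p w s z] pw w z ps P1_P4[OF z(1) w(1)] by (auto simp: adj_sym)
  have py: "E p y"
    using C4_free[of p u y r] u y ru pr not_P1 P1_adj[OF u(1) y(1)] by (auto simp: adj_sym)
  have ys: "\<not> E y s"
    using C4_free[of p y s w] py pw w ps P1_P4[OF y(1) w(1)] by (auto simp: adj_sym)
  have rz: "\<not> E r z"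
    using C4_free[of p u z r] u z su pr ru pz not_P1 P1_adj[OF u(1) z(1)] by (auto simp: adj_sym)
  have "y \<noteq> z" using py pz by blast
  then show False
    using C4_free[of r y z s] y z rs rz ys not_P1 P1_adj[OF y(1) z(1)] by (auto simp: adj_sym)
qed

lemma apex_path_end_neighbour:
  assumes p: "outside p" and r: "apex r" and s: "apex s"
    and pr: "E p r" and rs: "E r s" and ps: "\<not> E p s" "p \<noteq> s"
    and u: "u \<in> P1 \<union> P4" "E p u"
  shows "E r u"
proof -
  interpret mirrored: P4_blowup V E P4 P3 P2 P1 by (rule mirror)
  note r' = apex_outside[OF r]
  from u(1) consider "u \<in> P1" | "u \<in> P4" by blast
  then show ?thesis
  proof cases
    case 1
    obtain y where "y \<in> P1" "E r y" using r unfolding apex_def by blast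
    with 1 show ?thesis using apex_path_P1_neighbour[OF p r' s pr rs ps] u(2) by blast
  next
    case 2
    obtain y where "y \<in> P4" "E r y" using r unfolding apex_def by blast
    with 2 show ?thesis
      using mirrored.apex_path_P1_neighbour[unfolded mirror_outside mirror_apex, OF p r' s pr rs ps]
        u(2) by blast
  qed
qed

lemma apex_path_apex_neighbour:
  assumes a: "apex a" and b: "apex b" and c: "apex c" and x: "apex x"
    and ab: "E a b" and bc: "E b c" and ac: "\<not> E a c" "a \<noteq> c"
    and ax: "E a x" and bx: "b \<noteq> x"
  shows "E b x"
proof (rule ccontr)
  assume "\<not> E b x"
  have c_to_b: "E b u" if "u \<in> P1 \<union> P4" "E c u" for u
    using apex_path_end_neighbour[OF apex_outside[OF c] b a _ _ _ _ that] ab bc ac by (auto simp: adj_sym)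
  have b_to_a: "E a u" if "u \<in> P1 \<union> P4" "E b u" for u
    using apex_path_end_neighbour[OF apex_outside[OF b] a x _ ax _ bx that] ab \<open>\<not> E b x\<close>
    by (auto simp: adj_sym)
  obtain z w where z: "z \<in> P1" "E c z" and w: "w \<in> P4" "E c w"
    using c unfolding apex_def by blast
  have "\<not> E z w" "z \<noteq> w" using anticompleteD[OF anticomplete(2) z(1) w(1)] disjoint z w by blast+
  then show False
    using C4_free[of a z c w] z w c_to_b b_to_a ac by (auto simp: adj_sym)
qed

end

lemma mod_add_left_cancel_nat: "((i::nat) + k) mod n = (i + m) mod n \<longleftrightarrow> k mod n = m mod n"
proof
  assume "(i + k) mod n = (i + m) mod n"
  then show "k mod n = m mod n" by (simp add: nat_mod_eq_iff)
next
  assume "k mod n = m mod n"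
  then show "(i + k) mod n = (i + m) mod n" by (metis mod_add_right_eq)
qed

lemma nice_blowup_C5D:
  assumes "nice_blowup_C5 V E B"
  shows "\<And>j. j < 5 \<Longrightarrow> clique V E (B j)"
    and "\<And>j k. j < 5 \<Longrightarrow> k < 5 \<Longrightarrow> j \<noteq> k \<Longrightarrow> B j \<inter> B k = {}"
    and "\<And>j v. j < 5 \<Longrightarrow> v \<in> B j \<Longrightarrow> \<exists>u\<in>B ((j + 4) mod 5). E v u"
    and "\<And>j v. j < 5 \<Longrightarrow> v \<in> B j \<Longrightarrow> \<exists>u\<in>B ((j + 1) mod 5). E v u"
    and "\<And>j. j < 5 \<Longrightarrow> anticomplete E (B j) (B ((j + 2) mod 5))"
  using assms unfolding nice_blowup_C5_def by blast+

locale nice_C5_blowup_around = P7_C4_C6_C7_free +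
  fixes B :: "nat \<Rightarrow> 'a set" and i :: nat
  assumes nice: "nice_blowup_C5 V E B" and i_less: "i < 5"
begin

definition bag :: "nat \<Rightarrow> 'a set" where
  "bag k = B ((i + k) mod 5)"

lemma bag_mod: "bag (k mod 5) = bag k"
  unfolding bag_def by (simp add: mod_add_right_eq)

lemma bag_clique: "clique V E (bag k)"
  using nice_blowup_C5D(1)[OF nice, of "(i + k) mod 5"] unfolding bag_def by simp

lemma bag_shift: "B (((i + k) mod 5 + m) mod 5) = bag (k + m)"
  unfolding bag_def mod_add_left_eq add.assoc ..

lemma bag_succ: "v \<in> bag k \<Longrightarrow> \<exists>u\<in>bag (k + 1). E v u"
  using nice_blowup_C5D(4)[OF nice, of "(i + k) mod 5" v] unfolding bag_shift by (simp add: bag_def)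

lemma bag_pred: "v \<in> bag k \<Longrightarrow> \<exists>u\<in>bag (k + 4). E v u"
  using nice_blowup_C5D(3)[OF nice, of "(i + k) mod 5" v] unfolding bag_shift by (simp add: bag_def)

lemma bag_anticomplete: "anticomplete E (bag k) (bag (k + 2))"
  using nice_blowup_C5D(5)[OF nice, of "(i + k) mod 5"] unfolding bag_shift by (simp add: bag_def)

lemma bag_disjoint: "k mod 5 \<noteq> l mod 5 \<Longrightarrow> bag k \<inter> bag l = {}"
proof -
  assume "k mod 5 \<noteq> l mod 5"
  then have "(i + k) mod 5 \<noteq> (i + l) mod 5" by (simp add: mod_add_left_cancel_nat)
  then show ?thesis
    using nice_blowup_C5D(2)[OF nice, of "(i + k) mod 5" "(i + l) mod 5"] unfolding bag_def by simp
qed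

sublocale P4_blowup V E "bag 1" "bag 2" "bag 3" "bag 4"
proof
  show "clique V E (bag 1)" "clique V E (bag 2)" "clique V E (bag 3)" "clique V E (bag 4)"
    by (fact bag_clique)+
  show "\<exists>y\<in>bag 2. E x y" if "x \<in> bag 1" for x
    using bag_succ[OF that, unfolded one_add_one] .
  show "\<exists>y\<in>bag 3. E x y" if "x \<in> bag 2" for x using bag_succ[OF that] by simp
  show "\<exists>y\<in>bag 2. E x y" if "x \<in> bag 3" for x using bag_pred[OF that] bag_mod[of 7] by simp
  show "\<exists>y\<in>bag 3. E x y" if "x \<in> bag 4" for x using bag_pred[OF that] bag_mod[of 8] by simp
  show "anticomplete E (bag 1) (bag 3)"
    using bag_anticomplete[of 1] by (simp add: numeral_eq_Suc)
  show "anticomplete E (bag 2) (bag 4)"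
    using bag_anticomplete[of 2] by simp
  show "anticomplete E (bag 1) (bag 4)"
    using anticomplete_sym[OF adj_sym bag_anticomplete[of 4]] bag_mod[of 6] by simp
  show "bag 1 \<inter> bag 4 = {}" by (simp add: bag_disjoint)
qed

lemma bag0_apex:
  assumes x: "x \<in> bag 0"
  shows "apex x"
proof -
  have "bag 0 \<inter> bag 1 = {}" "bag 0 \<inter> bag 4 = {}" by (simp_all add: bag_disjoint)
  then have "x \<notin> bag 1 \<union> bag 4" using x by blast
  moreover have "\<forall>y\<in>bag 2 \<union> bag 3. \<not> E x y"
  proof -
    have "anticomplete E (bag 0) (bag 2)" "anticomplete E (bag 0) (bag 3)"
      using bag_anticomplete[of 0, unfolded add_0]
        anticomplete_sym[OF adj_sym bag_anticomplete[of 3]] bag_mod[of 5, symmetric]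
      by simp_all
    then show ?thesis using x unfolding anticomplete_def by blast
  qed
  moreover have "\<exists>y\<in>bag 1. E x y" "\<exists>y\<in>bag 4. E x y"
    using bag_succ[OF x] bag_pred[OF x] by simp_all
  ultimately show ?thesis unfolding apex_def outside_def by blast
qed

lemma A3_adj_bag_iff:
  assumes v: "v \<in> A3 V E B i"
  shows "(\<exists>u\<in>bag k. E v u) \<longleftrightarrow> k mod 5 \<in> {0, 1, 4}"
proof -
  have "(\<exists>u\<in>bag k. E v u) \<longleftrightarrow> (i + k) mod 5 \<in> supp E B v"
    unfolding bag_def supp_def by simp
  also have "\<dots> \<longleftrightarrow> (i + k) mod 5 \<in> {(i + 4) mod 5, (i + 0) mod 5, (i + 1) mod 5}"
    using v i_less unfolding A3_def by simp
  also have "\<dots> \<longleftrightarrow> k mod 5 \<in> {4 mod 5, 0 mod 5, 1 mod 5}"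
    by (simp only: insert_iff empty_iff mod_add_left_cancel_nat)
  finally show ?thesis by auto
qed

lemma A3_not_in_bag: "v \<in> A3 V E B i \<Longrightarrow> v \<notin> bag k"
  unfolding A3_def VH_def bag_def by auto

lemma A3_apex: "v \<in> A3 V E B i \<Longrightarrow> apex v"
  using A3_not_in_bag A3_adj_bag_iff[of v 1] A3_adj_bag_iff[of v 2] A3_adj_bag_iff[of v 3]
    A3_adj_bag_iff[of v 4]
  unfolding apex_def outside_def by auto

lemma A3_NH_subset:
  assumes v: "v \<in> A3 V E B i"
  shows "NH E B v \<subseteq> bag 0 \<union> bag 1 \<union> bag 4"
proof
  fix u assume "u \<in> NH E B v"
  then obtain j where j: "j < 5" "u \<in> B j" "E v u" unfolding NH_def VH_def by blast
  define k where "k = (j + 5 - i) mod 5"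
  have "bag k = B j"
    unfolding bag_def k_def using i_less j(1) by (simp add: mod_add_right_eq)
  then have "k \<in> {0, 1, 4}" using A3_adj_bag_iff[OF v, of k] j unfolding k_def by auto
  with \<open>bag k = B j\<close> j(2) show "u \<in> bag 0 \<union> bag 1 \<union> bag 4" by auto
qed

lemma A3_induced_path_NH_subset:
  assumes a: "a \<in> A3 V E B i" and b: "b \<in> A3 V E B i" and c: "c \<in> A3 V E B i"
    and ab: "E a b" and bc: "E b c" and ac: "\<not> E a c" "a \<noteq> c"
  shows "NH E B a \<subseteq> NH E B b"
proof
  fix u assume u: "u \<in> NH E B a"
  then have au: "E a u" and uH: "u \<in> VH B" unfolding NH_def by auto
  have "E b u"
  proof (cases "u \<in> bag 0")
    case True
    then show ?thesis
      using apex_path_apex_neighbour[OF A3_apex[OF a] A3_apex[OF b] A3_apex[OF c] bag0_apex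
          ab bc ac au] A3_not_in_bag[OF b, of 0] by blast
  next
    case False
    then have "u \<in> bag 1 \<union> bag 4" using A3_NH_subset[OF a] u by blast
    then show ?thesis
      using apex_path_end_neighbour[OF apex_outside[OF A3_apex[OF a]] A3_apex[OF b] A3_apex[OF c]
          ab bc ac _ au] by blast
  qed
  with uH show "u \<in> NH E B b" unfolding NH_def by blast
qed

end

theorem lemma8p4:
  fixes V :: "'a set" and E :: "'a \<Rightarrow> 'a \<Rightarrow> bool" and B :: "nat \<Rightarrow> 'a set"
  assumes "simple_graph V E"
    and "\<not> has_induced_P 7 V E" and "\<not> has_induced_C 4 V E"
    and "\<not> has_induced_C 6 V E" and "\<not> has_induced_C 7 V E"
    and "nice_blowup_C5 V E B"
    and "i < 5"
    and "a \<in> A3 V E B i" and "b \<in> A3 V E B i" and "c \<in> A3 V E B i"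
    and "induced_path V E [a, b, c]"
  shows "NH E B a \<subseteq> NH E B b \<and> NH E B c \<subseteq> NH E B b"
proof -
  interpret nice_C5_blowup_around V E B i
    using assms(1-7) by unfold_locales
  have path: "E a b" "E b c" "\<not> E a c" "a \<noteq> c"
    using assms(11) unfolding induced_path_def by (simp_all add: All_less_Suc2)
  then show ?thesis
    using A3_induced_path_NH_subset[OF assms(8-10)] A3_induced_path_NH_subset[OF assms(10,9,8)]
    by (auto simp: adj_sym)
qed

end
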